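(* Let $n\ge 1$ and $s>0$. Let $B$ be a random $n\times n$ matrix whose entries are i.i.d. with a continuous distribution (with density) supported on $[-1,1]$ and symmetric around $0$, and let $A=U+sB$, where $U$ is the $n\times n$ all-ones matrix. Then the probability that $A$ is an equilibrium is at least $2^{-(2n-1)}$, where $A$ is called an equilibrium if there exist a real $a>1$ and vectors $x,y\in\mathbb{R}^n$ with nonnegative entries, each summing to $1$, such that $Ax=a\mathbf{1}$ and $A^Ty=a\mathbf{1}$ (here $\mathbf{1}$ is the all-ones vector). *)

theory Defs
  imports "HOL-Probability.Probability"
begin

definition equilibrium :: "real^'n^'n \<Rightarrow> bool" where
  "equilibrium A \<longleftrightarrow>
     (\<exists>a::real. a > 1 \<and> (\<exists>x y :: real^'n.
        (\<forall>i. x $ i \<ge> 0) \<and> (\<Sum>i\<in>UNIV. x $ i) = 1 \<and>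
        (\<forall>i. y $ i \<ge> 0) \<and> (\<Sum>i\<in>UNIV. y $ i) = 1 \<and>
        A *v x = (\<chi> i. a) \<and> transpose A *v y = (\<chi> i. a)))"

definition perturbed_ones :: "real \<Rightarrow> ('n \<times> 'n \<Rightarrow> real) \<Rightarrow> real^'n^'n" where
  "perturbed_ones s B = (\<chi> i j. 1 + s * B (i, j))"

end

theory Submission
  imports Defs
begin

(* For nonsingular B choose sign vectors e1, e2 maximising e2^T B^-1 e1 over all sign vectors.
   Flipping a single sign cannot increase this value, so x = diag(e2) B^-1 e1 and
   y = diag(e1) B^-T e2 are nonnegative; they solve M x = 1 and M^T y = 1 for
   M = diag(e1) B diag(e2), so after normalisation they are equalizing strategies of M with
   positive value, and hence equilibrium strategies of U + s M with value > 1.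
   The entry distribution is atomless and det is affine in each entry, so B is almost surely
   nonsingular; it is symmetric, so B -> diag(e1) B diag(e2) preserves the law of B.
   Hence the events "diag(e1) B diag(e2) is an equilibrium", one for each of the 2^(2n-1)
   sign pairs normalised by e1 i0 = 1 (the pairs (e1, e2) and (-e1, -e2) give the same
   matrix), all have the probability of the theorem and together cover almost every B. *)

section \<open>Equalizing strategies of sign-scaled nonsingular matrices\<close>

definition stochastic_vectors :: "(real^'n) set" where
  "stochastic_vectors = {x. (\<forall>i. 0 \<le> x$i) \<and> (\<Sum>i\<in>UNIV. x$i) = 1}"

definition positive_equalizer :: "real^'n^'m \<Rightarrow> bool" where
  "positive_equalizer A \<longleftrightarrow> (\<exists>x\<in>stochastic_vectors. \<exists>y\<in>stochastic_vectors. \<exists>c>0.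
      A *v x = (\<chi> i. c) \<and> transpose A *v y = (\<chi> j. c))"

lemma positive_equalizer_if_nonneg_solutions:
  fixes M :: "real^'n::finite^'m::finite" and x :: "real^'n" and y :: "real^'m"
  assumes x: "\<And>j. 0 \<le> x$j" and y: "\<And>i. 0 \<le> y$i"
    and Mx: "M *v x = 1" and My: "transpose M *v y = 1"
  shows "positive_equalizer M"
proof -
  define m where "m = (\<Sum>j\<in>UNIV. x$j)"
  have "(\<Sum>i\<in>UNIV. y$i) = y \<bullet> (M *v x)"
    by (simp add: Mx inner_vec_def)
  also have "\<dots> = (y v* M) \<bullet> x"
    by (rule dot_lmul_matrix[symmetric])
  also have "\<dots> = m"
    using My by (simp add: inner_vec_def m_def)
  finally have sum_y: "(\<Sum>i\<in>UNIV. y$i) = m" .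
  have "x \<noteq> 0"
  proof
    assume "x = 0"
    with Mx show False by (simp add: vec_eq_iff)
  qed
  then have "m \<noteq> 0"
    using x by (auto simp: m_def vec_eq_iff sum_nonneg_eq_0_iff)
  then have m: "0 < m"
    using x by (simp add: m_def order_less_le sum_nonneg)
  show ?thesis
    unfolding positive_equalizer_def stochastic_vectors_def
  proof (intro bexI exI conjI)
    show "M *v ((1/m) *\<^sub>R x) = (\<chi> i. 1/m)" "transpose M *v ((1/m) *\<^sub>R y) = (\<chi> j. 1/m)"
      by (simp_all only: matrix_vector_mult_scaleR Mx My) (simp_all add: vec_eq_iff)
  qed (use x y m sum_y in \<open>auto simp: m_def simp flip: sum_divide_distrib\<close>)
qed

definition sign_vectors :: "('n \<Rightarrow> real) set" where
  "sign_vectors = {d. \<forall>i. d i \<in> {-1, 1}}"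

lemma sign_vectors_eq_PiE: "sign_vectors = (\<Pi>\<^sub>E i\<in>UNIV. {-1, 1})"
  by (auto simp: sign_vectors_def PiE_UNIV_domain)

lemma sign_vector_square: "d \<in> sign_vectors \<Longrightarrow> d i * d i = 1"
  unfolding sign_vectors_def by (auto dest: spec[of _ i])

lemma sign_vector_cancel: "d \<in> sign_vectors \<Longrightarrow> d i * (d i * z) = z"
  by (simp add: sign_vector_square flip: mult.assoc)

lemma finite_sign_vectors: "finite (sign_vectors :: ('n::finite \<Rightarrow> real) set)"
  unfolding sign_vectors_eq_PiE by (intro finite_PiE) auto

lemma ex_max_sign_vector_pair:
  fixes V :: "('m::finite \<Rightarrow> real) \<Rightarrow> ('n::finite \<Rightarrow> real) \<Rightarrow> real"
  obtains e1 e2 where "e1 \<in> sign_vectors" "e2 \<in> sign_vectors"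
    "\<And>d1 d2. d1 \<in> sign_vectors \<Longrightarrow> d2 \<in> sign_vectors \<Longrightarrow> V d1 d2 \<le> V e1 e2"
proof -
  define S :: "(('m \<Rightarrow> real) \<times> ('n \<Rightarrow> real)) set"
    where "S = sign_vectors \<times> sign_vectors"
  have "(\<lambda>_. 1, \<lambda>_. 1) \<in> S"
    by (simp add: S_def sign_vectors_def)
  then have "finite S" "S \<noteq> {}"
    by (auto simp: S_def finite_sign_vectors)
  from ex_is_arg_min_if_finite[OF this, of "\<lambda>(d1, d2). - V d1 d2"]
  obtain p where "is_arg_min (\<lambda>(d1, d2). - V d1 d2) (\<lambda>p. p \<in> S) p" ..
  moreover obtain e1 e2 where "p = (e1, e2)"
    by (cases p)
  ultimately have "e1 \<in> sign_vectors" "e2 \<in> sign_vectors"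
    "\<And>d1 d2. d1 \<in> sign_vectors \<Longrightarrow> d2 \<in> sign_vectors \<Longrightarrow> V d1 d2 \<le> V e1 e2"
    by (auto simp: is_arg_min_linorder S_def)
  then show ?thesis
    by (rule that)
qed

lemma sign_vector_maximizer_nonneg:
  fixes w :: "'n::finite \<Rightarrow> real"
  assumes e: "e \<in> sign_vectors"
    and max: "\<And>d. d \<in> sign_vectors \<Longrightarrow> (\<Sum>i\<in>UNIV. d i * w i) \<le> (\<Sum>i\<in>UNIV. e i * w i)"
  shows "0 \<le> e j * w j"
proof -
  have flip: "e(j := - e j) \<in> sign_vectors"
    using e by (auto simp: sign_vectors_def)
  have "(\<Sum>i\<in>UNIV. (e(j := - e j)) i * w i) = (\<Sum>i\<in>UNIV. e i * w i) - 2 * (e j * w j)"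
    by (simp add: sum.remove[of UNIV j] algebra_simps)
  then show ?thesis
    using max[OF flip] by simp
qed

definition sign_scaled :: "('m \<Rightarrow> real) \<Rightarrow> ('n \<Rightarrow> real) \<Rightarrow> real^'n^'m \<Rightarrow> real^'n^'m" where
  "sign_scaled d1 d2 B = (\<chi> i j. d1 i * d2 j * B$i$j)"

lemma sign_scaled_uminus: "sign_scaled (- d1) (- d2) B = sign_scaled d1 d2 B"
  by (simp add: sign_scaled_def)

lemma sign_scaled_mult_right_inverse:
  fixes B :: "real^'n::finite^'m::finite" and W :: "real^'m^'n"
  assumes BW: "B ** W = mat 1" and e: "e1 \<in> sign_vectors" "e2 \<in> sign_vectors"
  shows "sign_scaled e1 e2 B *v (\<chi> j. e2 j * (W *v (\<chi> k. e1 k))$j) = 1"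
proof -
  have "(\<Sum>j\<in>UNIV. e1 i * e2 j * B$i$j * (e2 j * (W *v (\<chi> k. e1 k))$j))
      = e1 i * (\<Sum>j\<in>UNIV. B$i$j * (W *v (\<chi> k. e1 k))$j)" for i
    by (simp add: sum_distrib_left algebra_simps sign_vector_cancel[OF e(2)])
  also have "\<dots> i = e1 i * (B *v (W *v (\<chi> k. e1 k)))$i" for i
    by (simp add: matrix_vector_mult_def)
  also have "\<dots> i = 1" for i
    using sign_vector_square[OF e(1)] by (simp add: matrix_vector_mul_assoc BW)
  finally show ?thesis
    by (simp add: vec_eq_iff matrix_vector_mult_def sign_scaled_def)
qed

lemma transpose_sign_scaled_mult_left_inverse:
  fixes B :: "real^'n::finite^'m::finite" and W :: "real^'m^'n"
  assumes WB: "W ** B = mat 1" and e: "e1 \<in> sign_vectors" "e2 \<in> sign_vectors"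
  shows "transpose (sign_scaled e1 e2 B) *v (\<chi> i. e1 i * ((\<chi> j. e2 j) v* W)$i) = 1"
proof -
  have "(\<Sum>i\<in>UNIV. e1 i * ((\<chi> j. e2 j) v* W)$i * (e1 i * e2 j * B$i$j))
      = e2 j * (\<Sum>i\<in>UNIV. ((\<chi> j. e2 j) v* W)$i * B$i$j)" for j
    by (simp add: sum_distrib_left algebra_simps sign_vector_cancel[OF e(1)])
  also have "\<dots> j = e2 j * (((\<chi> j. e2 j) v* W) v* B)$j" for j
    by (simp add: vector_matrix_mult_def)
  also have "\<dots> j = 1" for j
    using sign_vector_square[OF e(2)] by (simp add: vector_matrix_mul_assoc WB)
  finally show ?thesis
    by (simp add: vec_eq_iff vector_matrix_mult_def sign_scaled_def)
qed

lemma invertible_imp_sign_scaled_positive_equalizer: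
  fixes B :: "real^'n::finite^'n"
  assumes "invertible B"
  shows "\<exists>e1\<in>sign_vectors. \<exists>e2\<in>sign_vectors. positive_equalizer (sign_scaled e1 e2 B)"
proof -
  obtain W where BW: "B ** W = mat 1" and WB: "W ** B = mat 1"
    using assms unfolding invertible_def by blast
  define V where "V d1 d2 = (\<chi> j. d2 j) \<bullet> (W *v (\<chi> k. d1 k))" for d1 d2 :: "'n \<Rightarrow> real"
  obtain e1 e2 where e: "e1 \<in> sign_vectors" "e2 \<in> sign_vectors"
    and max: "\<And>d1 d2. d1 \<in> sign_vectors \<Longrightarrow> d2 \<in> sign_vectors \<Longrightarrow> V d1 d2 \<le> V e1 e2"
    using ex_max_sign_vector_pair[of V] by blast
  have V_row: "V e1 d2 = (\<Sum>j\<in>UNIV. d2 j * (W *v (\<chi> k. e1 k))$j)" for d2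
    unfolding V_def by (simp only: inner_vec_def inner_real_def vec_lambda_beta)
  have V_col: "V d1 e2 = (\<Sum>k\<in>UNIV. d1 k * ((\<chi> j. e2 j) v* W)$k)" for d1
    unfolding V_def by (subst dot_lmul_matrix[symmetric]) (simp add: inner_vec_def mult.commute)
  have "0 \<le> (\<chi> j. e2 j * (W *v (\<chi> k. e1 k))$j) $ j" for j
    using sign_vector_maximizer_nonneg[OF e(2)] max[OF e(1)] by (simp flip: V_row)
  moreover have "0 \<le> (\<chi> i. e1 i * ((\<chi> j. e2 j) v* W)$i) $ i" for i
    using sign_vector_maximizer_nonneg[OF e(1)] max[OF _ e(2)] by (simp flip: V_col)
  ultimately have "positive_equalizer (sign_scaled e1 e2 B)"
    using sign_scaled_mult_right_inverse[OF BW e] transpose_sign_scaled_mult_left_inverse[OF WB e]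
    by (rule positive_equalizer_if_nonneg_solutions)
  with e show ?thesis
    by blast
qed

definition matrix_of_entries :: "('m \<times> 'n \<Rightarrow> 'a) \<Rightarrow> 'a^'n^'m" where
  "matrix_of_entries B = (\<chi> i j. B (i, j))"

lemma equilibrium_perturbed_ones:
  fixes B :: "'n::finite \<times> 'n \<Rightarrow> real"
  assumes "positive_equalizer (matrix_of_entries B)" "0 < s"
  shows "equilibrium (perturbed_ones s B :: real^'n^'n)"
proof -
  obtain x y c where x: "x \<in> stochastic_vectors" and y: "y \<in> stochastic_vectors" and "0 < c"
    and Bx: "matrix_of_entries B *v x = (\<chi> i. c)" and By: "transpose (matrix_of_entries B) *v y = (\<chi> j. c)"
    using assms(1) unfolding positive_equalizer_def by blast
  have "(\<Sum>j\<in>UNIV. (1 + s * B (i, j)) * x$j) = 1 + s * c" for i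
  proof -
    have "(\<Sum>j\<in>UNIV. B (i, j) * x$j) = c"
      using arg_cong[OF Bx, of "\<lambda>v. v$i"] by (simp add: matrix_vector_mult_def matrix_of_entries_def)
    then show ?thesis
      using x by (simp add: stochastic_vectors_def algebra_simps sum.distrib flip: sum_distrib_left)
  qed
  moreover have "(\<Sum>i\<in>UNIV. (1 + s * B (i, j)) * y$i) = 1 + s * c" for j
  proof -
    have "(\<Sum>i\<in>UNIV. B (i, j) * y$i) = c"
      using arg_cong[OF By, of "\<lambda>v. v$j"]
      by (simp add: vector_matrix_mult_def matrix_of_entries_def mult.commute)
    then show ?thesis
      using y by (simp add: stochastic_vectors_def algebra_simps sum.distrib flip: sum_distrib_left)
  qed
  ultimately have "perturbed_ones s B *v x = (\<chi> i. 1 + s * c)"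
    "transpose (perturbed_ones s B) *v y = (\<chi> i. 1 + s * c)"
    by (simp_all add: vec_eq_iff matrix_vector_mult_def transpose_def perturbed_ones_def)
  moreover have "1 < 1 + s * c"
    using assms(2) \<open>0 < c\<close> by simp
  ultimately show ?thesis
    using x y unfolding equilibrium_def stochastic_vectors_def by blast
qed

section \<open>Zero sets of multi-affine functions\<close>

lemma sets_PiM_UNIV_eq_borel:
  fixes D :: "'b::second_countable_topology measure"
  assumes "sets D = sets borel"
  shows "sets (PiM (UNIV :: 'i::countable set) (\<lambda>_. D)) = sets (borel :: ('i \<Rightarrow> 'b) measure)"
proof -
  have "sets (PiM (UNIV :: 'i set) (\<lambda>_. D)) = sets (PiM UNIV (\<lambda>_. borel :: 'b measure))"
    using assms by (intro sets_PiM_cong) auto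
  then show ?thesis
    by (simp add: sets_PiM_equal_borel)
qed

lemma borel_measurable_PiM_if_continuous:
  fixes D :: "'b::second_countable_topology measure"
    and f :: "('i::countable \<Rightarrow> 'b) \<Rightarrow> 'c::topological_space"
  assumes "sets D = sets borel" "continuous_on UNIV f"
  shows "f \<in> borel_measurable (PiM UNIV (\<lambda>_. D))"
  using borel_measurable_continuous_onI[OF assms(2)]
    measurable_cong_sets[OF sets_PiM_UNIV_eq_borel[OF assms(1)] refl]
  by blast

definition multiaffine :: "'i set \<Rightarrow> (('i \<Rightarrow> real) \<Rightarrow> real) \<Rightarrow> bool" where
  "multiaffine I f \<longleftrightarrow>
     (\<forall>k\<in>I. \<forall>x t. f (x(k := t)) = f (x(k := 0)) + t * (f (x(k := 1)) - f (x(k := 0))))"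

lemma multiaffine_insertD:
  assumes f: "multiaffine (insert j I) f" and j: "j \<notin> I"
  shows "multiaffine I (\<lambda>x. f (x(j := 0)))"
    and "multiaffine I (\<lambda>x. f (x(j := 1)) - f (x(j := 0)))"
proof -
  have upd: "f (x(k := t, j := c)) = f (x(k := 0, j := c)) + t * (f (x(k := 1, j := c)) - f (x(k := 0, j := c)))"
    if k: "k \<in> I" for k x t c
  proof -
    have "k \<noteq> j"
      using k j by auto
    then show ?thesis
      using f k unfolding multiaffine_def by (metis fun_upd_twist insertI2)
  qed
  show "multiaffine I (\<lambda>x. f (x(j := 0)))"
    unfolding multiaffine_def using upd by blast
  show "multiaffine I (\<lambda>x. f (x(j := 1)) - f (x(j := 0)))"
    unfolding multiaffine_def
  proof (intro ballI allI)
    fix k x t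
    assume "k \<in> I"
    show "f (x(k := t, j := 1)) - f (x(k := t, j := 0))
        = f (x(k := 0, j := 1)) - f (x(k := 0, j := 0))
          + t * (f (x(k := 1, j := 1)) - f (x(k := 1, j := 0)) - (f (x(k := 0, j := 1)) - f (x(k := 0, j := 0))))"
      by (simp only: upd[OF \<open>k \<in> I\<close>, of x t]) (simp add: algebra_simps)
  qed
qed

lemma measurable_fun_upd_PiM:
  assumes "space D = UNIV" "j \<notin> I"
  shows "(\<lambda>x. x(j := c)) \<in> measurable (PiM I (\<lambda>_. D)) (PiM (insert j I) (\<lambda>_. D))"
proof -
  have "(\<lambda>x i. if i = j then c else x i) \<in> measurable (PiM I (\<lambda>_. D)) (PiM (insert j I) (\<lambda>_. D))"
    by (rule measurable_PiM_single')
       (use assms in \<open>auto simp: space_PiM PiE_def extensional_def\<close>)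
  then show ?thesis
    by (simp add: fun_upd_def)
qed

lemma emeasure_affine_zero_set:
  fixes D :: "real measure"
  assumes "prob_space D" "sets D = sets borel" and atomless: "\<And>y. emeasure D {y} = 0"
  shows "emeasure D {y. b + y * a = 0} = (if a = 0 \<and> b = 0 then 1 else 0)"
proof (cases "a = 0")
  case True
  have "space D = UNIV"
    using sets_eq_imp_space_eq[OF assms(2)] by simp
  then show ?thesis
    using True prob_space.emeasure_space_1[OF assms(1)] by auto
next
  case False
  then have "{y. b + y * a = 0} = {- b / a}"
    by (auto simp: field_simps)
  then show ?thesis
    using False atomless by simp
qed

(* Fubini over coordinate j: every fibre of the zero set of f is the zero set of an affine
   function of one variable, which is null unless both of its coefficients vanish. *)
lemma emeasure_PiM_insert_affine_zero_set:
  fixes D :: "real measure"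
  assumes D: "prob_space D" "sets D = sets borel" and atomless: "\<And>y. emeasure D {y} = 0"
    and I: "finite I" "j \<notin> I"
    and [measurable]: "f \<in> borel_measurable (PiM (insert j I) (\<lambda>_. D))"
      "a \<in> borel_measurable (PiM I (\<lambda>_. D))" "b \<in> borel_measurable (PiM I (\<lambda>_. D))"
    and f_upd: "\<And>x y. f (x(j := y)) = b x + y * a x"
  shows "emeasure (PiM (insert j I) (\<lambda>_. D)) {x\<in>space (PiM (insert j I) (\<lambda>_. D)). f x = 0}
    = emeasure (PiM I (\<lambda>_. D)) {x\<in>space (PiM I (\<lambda>_. D)). a x = 0 \<and> b x = 0}"
proof -
  let ?M = "PiM I (\<lambda>_. D)" and ?N = "PiM (insert j I) (\<lambda>_. D)"
  define S where "S = {x\<in>space ?N. f x = 0}"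
  define Z where "Z = {x\<in>space ?M. a x = 0 \<and> b x = 0}"
  have [measurable]: "S \<in> sets ?N" "Z \<in> sets ?M"
    unfolding S_def Z_def by measurable
  interpret product_sigma_finite "\<lambda>_. D"
    unfolding product_sigma_finite_def using prob_space_imp_sigma_finite[OF D(1)] by simp
  have fibre: "(\<integral>\<^sup>+ y. indicator S (x(j := y)) \<partial>D) = indicator Z x" if x: "x \<in> space ?M" for x
  proof -
    have "x(j := y) \<in> space ?N" for y
      using x sets_eq_imp_space_eq[OF D(2)] by (auto simp: space_PiM PiE_def extensional_def)
    then have "(\<integral>\<^sup>+ y. indicator S (x(j := y)) \<partial>D)
        = (\<integral>\<^sup>+ y. indicator {y. b x + y * a x = 0} y \<partial>D)"
      by (intro nn_integral_cong) (simp add: S_def f_upd indicator_def)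
    also have "\<dots> = emeasure D {y. b x + y * a x = 0}"
      using D(2) by (intro nn_integral_indicator) simp
    also have "\<dots> = indicator Z x"
      using emeasure_affine_zero_set[OF D atomless] x by (simp add: Z_def indicator_def)
    finally show ?thesis .
  qed
  have "emeasure ?N S = (\<integral>\<^sup>+ x. indicator S x \<partial>?N)"
    by simp
  also have "\<dots> = (\<integral>\<^sup>+ x. (\<integral>\<^sup>+ y. indicator S (x(j := y)) \<partial>D) \<partial>?M)"
    by (rule product_nn_integral_insert[OF I]) measurable
  also have "\<dots> = emeasure ?M Z"
    by (simp add: fibre nn_integral_cong[of ?M _ "indicator Z"] nn_integral_indicator)
  finally show ?thesis
    by (simp add: S_def Z_def)
qed

lemma emeasure_PiM_multiaffine_zero_set:
  fixes D :: "real measure"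
  assumes D: "prob_space D" "sets D = sets borel" and atomless: "\<And>y. emeasure D {y} = 0"
    and "finite I" and "f \<in> borel_measurable (PiM I (\<lambda>_. D))" and "multiaffine I f"
    and "\<exists>x\<in>space (PiM I (\<lambda>_. D)). f x \<noteq> 0"
  shows "emeasure (PiM I (\<lambda>_. D)) {x\<in>space (PiM I (\<lambda>_. D)). f x = 0} = 0"
  using assms(4-)
proof (induction I arbitrary: f rule: finite_induct)
  case empty
  then have "{x\<in>space (PiM {} (\<lambda>_. D)). f x = 0} = {}"
    by (auto simp: space_PiM_empty)
  then show ?case
    by (metis emeasure_empty)
next
  case (insert j I f)
  let ?M = "PiM I (\<lambda>_. D)" and ?N = "PiM (insert j I) (\<lambda>_. D)"
  have space_D: "space D = UNIV"
    using sets_eq_imp_space_eq[OF D(2)] by simp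
  define a where "a x = f (x(j := 1)) - f (x(j := 0))" for x
  define b where "b x = f (x(j := 0))" for x
  have f_upd: "f (x(j := y)) = b x + y * a x" for x y
    using \<open>multiaffine (insert j I) f\<close> unfolding multiaffine_def a_def b_def by blast
  have upd_meas: "(\<lambda>x. x(j := c)) \<in> measurable ?M ?N" for c
    by (rule measurable_fun_upd_PiM[OF space_D insert.hyps(2)])
  have coeffs_meas: "a \<in> borel_measurable ?M" "b \<in> borel_measurable ?M"
    unfolding a_def b_def using measurable_comp[OF upd_meas insert.prems(1)]
    by (auto simp: o_def intro!: borel_measurable_diff)
  have coeffs_multiaffine: "multiaffine I a" "multiaffine I b"
    unfolding a_def[abs_def] b_def[abs_def]
    using multiaffine_insertD[OF \<open>multiaffine (insert j I) f\<close> insert.hyps(2)] by auto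
  obtain g where g: "g \<in> {a, b}" "\<exists>x\<in>space ?M. g x \<noteq> 0"
  proof -
    obtain x0 where x0: "x0 \<in> space ?N" "f x0 \<noteq> 0"
      using insert.prems(3) by blast
    \<comment> \<open>points of \<open>PiM I\<close> are \<open>undefined\<close> outside \<open>I\<close>\<close>
    then have "x0(j := undefined) \<in> space ?M"
      using insert.hyps(2) by (auto simp: space_PiM PiE_def extensional_def space_D)
    moreover have "a (x0(j := undefined)) \<noteq> 0 \<or> b (x0(j := undefined)) \<noteq> 0"
      using f_upd[of "x0(j := undefined)" "x0 j"] x0(2) by auto
    ultimately show ?thesis
      using that[of a] that[of b] by blast
  qed
  then have [measurable]: "g \<in> borel_measurable ?M"
    using coeffs_meas by auto
  have "emeasure ?N {x\<in>space ?N. f x = 0} = emeasure ?M {x\<in>space ?M. a x = 0 \<and> b x = 0}"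
    by (rule emeasure_PiM_insert_affine_zero_set[OF D atomless insert.hyps insert.prems(1)
          coeffs_meas f_upd])
  also have "\<dots> \<le> emeasure ?M {x\<in>space ?M. g x = 0}"
    using g(1) by (intro emeasure_mono) auto
  also have "\<dots> = 0"
    using insert.IH g coeffs_meas coeffs_multiaffine by blast
  finally show ?case
    by simp
qed

lemma prod_graph_fun_upd_affine:
  fixes x :: "'a \<times> 'b \<Rightarrow> real" and p :: "'a \<Rightarrow> 'b"
  assumes "finite A"
  shows "(\<Prod>i\<in>A. (x(k := t)) (i, p i))
    = (\<Prod>i\<in>A. (x(k := 0)) (i, p i))
      + t * ((\<Prod>i\<in>A. (x(k := 1)) (i, p i)) - (\<Prod>i\<in>A. (x(k := 0)) (i, p i)))"
proof (cases "\<exists>i0\<in>A. k = (i0, p i0)")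
  case True
  then obtain i0 where i0: "i0 \<in> A" "k = (i0, p i0)"
    by blast
  have "(\<Prod>i\<in>A - {i0}. (x(k := c)) (i, p i)) = (\<Prod>i\<in>A - {i0}. x (i, p i))" for c
    using i0 by (intro prod.cong) auto
  then have "(\<Prod>i\<in>A. (x(k := c)) (i, p i)) = c * (\<Prod>i\<in>A - {i0}. x (i, p i))" for c
    using i0 by (simp add: prod.remove[OF assms i0(1)])
  then show ?thesis
    by (simp add: algebra_simps)
next
  case False
  then have "(\<Prod>i\<in>A. (x(k := c)) (i, p i)) = (\<Prod>i\<in>A. x (i, p i))" for c
    by (intro prod.cong) auto
  then show ?thesis
    by simp
qed

lemma multiaffine_det: "multiaffine UNIV (\<lambda>B. det (matrix_of_entries B :: real^'n::finite^'n))"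
  unfolding multiaffine_def
proof (intro ballI allI)
  fix k :: "'n \<times> 'n" and x :: "'n \<times> 'n \<Rightarrow> real" and t :: real
  let ?term = "\<lambda>c p. of_int (sign p) * (\<Prod>i\<in>UNIV. (x(k := c)) (i, p i))"
  have "?term t p = ?term 0 p + t * (?term 1 p - ?term 0 p)" for p
    by (simp only: prod_graph_fun_upd_affine[OF finite_class.finite_UNIV, of x k t]) (simp add: algebra_simps)
  then have "(\<Sum>p | p permutes UNIV. ?term t p)
      = (\<Sum>p | p permutes UNIV. ?term 0 p)
        + t * ((\<Sum>p | p permutes UNIV. ?term 1 p) - (\<Sum>p | p permutes UNIV. ?term 0 p))"
    by (simp add: sum.distrib sum_subtractf flip: sum_distrib_left)
  then show "det (matrix_of_entries (x(k := t)) :: real^'n^'n)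
      = det (matrix_of_entries (x(k := 0)) :: real^'n^'n)
        + t * (det (matrix_of_entries (x(k := 1)) :: real^'n^'n) - det (matrix_of_entries (x(k := 0)) :: real^'n^'n))"
    by (simp add: det_def matrix_of_entries_def)
qed

lemma continuous_on_det_matrix_of_entries:
  "continuous_on UNIV (\<lambda>B. det (matrix_of_entries B :: real^'n::finite^'n))"
  unfolding det_def matrix_of_entries_def
  by (simp add: continuous_on_product_coordinates continuous_intros)

lemma AE_PiM_det_nonzero:
  fixes D :: "real measure"
  assumes D: "prob_space D" "sets D = sets borel" and atomless: "\<And>y. emeasure D {y} = 0"
  shows "AE B in PiM UNIV (\<lambda>_. D). det (matrix_of_entries B :: real^'n::finite^'n) \<noteq> 0"
proof -
  let ?P = "PiM (UNIV :: ('n \<times> 'n) set) (\<lambda>_. D)"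
  have det_meas[measurable]: "(\<lambda>B. det (matrix_of_entries B :: real^'n^'n)) \<in> borel_measurable ?P"
    by (rule borel_measurable_PiM_if_continuous[OF D(2) continuous_on_det_matrix_of_entries])
  have "matrix_of_entries (\<lambda>(i, j). if i = j then 1 else 0) = (mat 1 :: real^'n^'n)"
    by (simp add: matrix_of_entries_def mat_def)
  moreover have "(\<lambda>(i, j). if i = j then 1 else 0) \<in> space ?P"
    using sets_eq_imp_space_eq[OF D(2)] by (simp add: space_PiM)
  ultimately have "\<exists>B\<in>space ?P. det (matrix_of_entries B :: real^'n^'n) \<noteq> 0"
    by force
  then have "emeasure ?P {B\<in>space ?P. det (matrix_of_entries B :: real^'n^'n) = 0} = 0"
    by (intro emeasure_PiM_multiaffine_zero_set[OF D atomless] multiaffine_det) auto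
  then show ?thesis
    by (subst AE_iff_measurable) auto
qed

section \<open>Sign changes preserve the law of a symmetric random matrix\<close>

lemma measurable_PiM_scale_coordinates:
  fixes D :: "real measure"
  assumes "sets D = sets borel"
  shows "(\<lambda>B k. c k * B k) \<in> measurable (PiM (UNIV :: 'i set) (\<lambda>_. D)) (PiM UNIV (\<lambda>_. D))"
proof (rule measurable_PiM_single')
  fix k :: 'i
  have "(\<lambda>t. c k * t) \<in> measurable D D"
    using assms by (simp add: measurable_cong_sets[OF assms assms])
  then show "(\<lambda>B. c k * B k) \<in> measurable (PiM UNIV (\<lambda>_. D)) D"
    by measurable
qed (use sets_eq_imp_space_eq[OF assms] in \<open>auto simp: space_PiM\<close>)

lemma emeasure_vimage_sign_mult:
  fixes D :: "real measure"
  assumes "sets D = sets borel" "distr D borel uminus = D" "A \<in> sets D" "a \<in> {-1, 1}"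
  shows "emeasure D ((\<lambda>t. a * t) -` A) = emeasure D A"
proof (cases "a = 1")
  case False
  then have "(\<lambda>t. a * t) -` A = uminus -` A \<inter> space D"
    using assms(4) sets_eq_imp_space_eq[OF assms(1)] by auto
  also have "emeasure D \<dots> = emeasure (distr D borel uminus) A"
    using assms(1,3) by (intro emeasure_distr[symmetric]) (simp_all add: measurable_cong_sets[OF assms(1) refl])
  finally show ?thesis
    using assms(2) by simp
qed simp

lemma distr_PiM_scale_coordinates:
  fixes D :: "real measure" and c :: "'i::finite \<Rightarrow> real"
  assumes D: "prob_space D" "sets D = sets borel" "distr D borel uminus = D"
    and c: "\<And>k. c k \<in> {-1, 1}"
  shows "distr (PiM UNIV (\<lambda>_. D)) (PiM UNIV (\<lambda>_. D)) (\<lambda>B k. c k * B k) = PiM UNIV (\<lambda>_. D)"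
proof -
  let ?P = "PiM (UNIV :: 'i set) (\<lambda>_. D)"
  interpret product_sigma_finite "\<lambda>_. D"
    unfolding product_sigma_finite_def using prob_space_imp_sigma_finite[OF D(1)] by simp
  note scale_meas = measurable_PiM_scale_coordinates[OF D(2), of c]
  show ?thesis
  proof (rule PiM_eqI)
    fix A :: "'i \<Rightarrow> real set"
    assume A: "\<And>i. i \<in> UNIV \<Longrightarrow> A i \<in> sets D"
    have "(\<lambda>B k. c k * B k) -` PiE UNIV A \<inter> space ?P = PiE UNIV (\<lambda>k. (\<lambda>t. c k * t) -` A k)"
      using sets_eq_imp_space_eq[OF D(2)] by (auto simp: space_PiM PiE_UNIV_domain)
    moreover have "(\<lambda>t. c k * t) -` A k \<in> sets D" for k
      using measurable_sets[OF _ A, of "\<lambda>t. c k * t" D k] sets_eq_imp_space_eq[OF D(2)]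
      by (simp add: measurable_cong_sets[OF D(2) D(2)])
    ultimately have "emeasure (distr ?P ?P (\<lambda>B k. c k * B k)) (PiE UNIV A)
        = (\<Prod>k\<in>UNIV. emeasure D ((\<lambda>t. c k * t) -` A k))"
      using A by (simp add: emeasure_distr[OF scale_meas] sets_PiM_I_finite emeasure_PiM)
    also have "\<dots> = (\<Prod>k\<in>UNIV. emeasure D (A k))"
      using emeasure_vimage_sign_mult[OF D(2,3) A c] by simp
    finally show "emeasure (distr ?P ?P (\<lambda>B k. c k * B k)) (PiE UNIV A) = (\<Prod>k\<in>UNIV. emeasure D (A k))" .
  qed simp_all
qed

section \<open>Measurability of the equilibrium event\<close>

lemma compact_stochastic_vectors: "compact (stochastic_vectors :: (real^'n::finite) set)"
proof (rule compact_eq_bounded_closed[THEN iffD2], intro conjI)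
  show "bounded (stochastic_vectors :: (real^'n) set)"
    unfolding bounded_iff
  proof (intro exI ballI)
    fix x :: "real^'n"
    assume "x \<in> stochastic_vectors"
    then have "(\<Sum>i\<in>UNIV. \<bar>x$i\<bar>) = 1"
      by (simp add: stochastic_vectors_def)
    then show "norm x \<le> 1"
      using norm_le_l1_cart[of x] by simp
  qed
  have eq: "stochastic_vectors = (\<Inter>i. {x::real^'n. 0 \<le> x$i}) \<inter> {x. (\<Sum>i\<in>UNIV. x$i) = 1}"
    by (auto simp: stochastic_vectors_def)
  show "closed (stochastic_vectors :: (real^'n) set)"
    unfolding eq by (intro closed_Int closed_INT ballI closed_Collect_le closed_Collect_eq continuous_intros)
qed

definition equalizer_matrices :: "real set \<Rightarrow> (real^'n^'n) set" where
  "equalizer_matrices V = {A. \<exists>x\<in>stochastic_vectors. \<exists>y\<in>stochastic_vectors. \<exists>a\<in>V.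
     A *v x = (\<chi> i. a) \<and> transpose A *v y = (\<chi> i. a)}"

lemma equilibrium_iff_equalizer_matrices: "equilibrium A \<longleftrightarrow> A \<in> equalizer_matrices {1<..}"
  unfolding equilibrium_def equalizer_matrices_def stochastic_vectors_def by auto

lemma equalizer_matrices_UN: "equalizer_matrices (\<Union>k. V k) = (\<Union>k. equalizer_matrices (V k))"
  unfolding equalizer_matrices_def by blast

lemma closed_equalizer_matrices:
  assumes "compact V"
  shows "closed (equalizer_matrices V :: (real^'n::finite^'n) set)"
proof -
  let ?W = "stochastic_vectors \<times> stochastic_vectors \<times> V :: ((real^'n) \<times> (real^'n) \<times> real) set"
  let ?T = "{(w, A :: real^'n^'n).
    A *v fst w = (\<chi> i. snd (snd w)) \<and> transpose A *v fst (snd w) = (\<chi> i. snd (snd w))}"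
  have "compact ?W"
    by (intro compact_Times compact_stochastic_vectors assms)
  moreover have "closed ?T"
    unfolding case_prod_unfold matrix_vector_mult_def transpose_def
    by (intro closed_Collect_conj closed_Collect_eq continuous_intros)
  ultimately have "closed {A. \<exists>w. w \<in> ?W \<and> (w, A) \<in> ?T}"
    by (rule closed_compact_projection)
  moreover have "{A. \<exists>w. w \<in> ?W \<and> (w, A) \<in> ?T} = equalizer_matrices V"
    unfolding equalizer_matrices_def by (auto; meson)
  ultimately show ?thesis
    by simp
qed

lemma greaterThan_one_eq_UN_Icc: "{1<..} = (\<Union>k. {1 + 1 / Suc k..real (Suc k)})"
proof (intro set_eqI iffI)
  fix a :: real
  assume "a \<in> {1<..}"
  obtain k1 k2 :: nat where "a < k1" "1 / (a - 1) < k2"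
    using reals_Archimedean2 by metis
  then have "a < Suc (max k1 k2)" "1 / (a - 1) < Suc (max k1 k2)"
    by linarith+
  with \<open>a \<in> {1<..}\<close> have "a \<in> {1 + 1 / Suc (max k1 k2)..Suc (max k1 k2)}"
    by (auto simp: field_simps)
  then show "a \<in> (\<Union>k. {1 + 1 / Suc k..real (Suc k)})"
    by blast
next
  fix a :: real
  assume "a \<in> (\<Union>k. {1 + 1 / Suc k..real (Suc k)})"
  then obtain k :: nat where "1 + 1 / Suc k \<le> a"
    by auto
  moreover have "0 < 1 / real (Suc k)"
    by simp
  ultimately have "1 < a"
    by linarith
  then show "a \<in> {1<..}"
    by simp
qed

lemma sets_equilibria: "{A :: real^'n::finite^'n. equilibrium A} \<in> sets borel"
proof -
  have eq: "{A :: real^'n^'n. equilibrium A} = (\<Union>k. equalizer_matrices {1 + 1 / Suc k..real (Suc k)})"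
    by (auto simp: equilibrium_iff_equalizer_matrices greaterThan_one_eq_UN_Icc equalizer_matrices_UN)
  have "equalizer_matrices {1 + 1 / Suc k..real (Suc k)} \<in> sets (borel :: (real^'n^'n) measure)" for k
    by (intro borel_closed closed_equalizer_matrices compact_Icc)
  then show ?thesis
    unfolding eq by (intro sets.countable_nat_UN) auto
qed

lemma sets_perturbed_ones_equilibria:
  fixes D :: "real measure"
  assumes "sets D = sets borel"
  shows "{B \<in> space (PiM UNIV (\<lambda>_. D)). equilibrium (perturbed_ones s B :: real^'n::finite^'n)}
    \<in> sets (PiM UNIV (\<lambda>_. D))"
proof -
  have "continuous_on UNIV (perturbed_ones s :: ('n \<times> 'n \<Rightarrow> real) \<Rightarrow> real^'n^'n)"
    unfolding perturbed_ones_def by (intro continuous_intros continuous_on_product_coordinates)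
  then have "(perturbed_ones s :: ('n \<times> 'n \<Rightarrow> real) \<Rightarrow> real^'n^'n)
      \<in> borel_measurable (PiM UNIV (\<lambda>_. D))"
    by (rule borel_measurable_PiM_if_continuous[OF assms])
  from measurable_sets[OF this sets_equilibria] show ?thesis
    by (simp add: vimage_def Int_def conj_commute)
qed

section \<open>Covering almost every matrix by sign changes\<close>

lemma (in prob_space) prob_ge_inverse_card_if_AE_cover:
  assumes "finite T" and E: "E \<in> events"
    and g_meas: "\<And>t. t \<in> T \<Longrightarrow> g t \<in> measurable M M"
    and g_distr: "\<And>t. t \<in> T \<Longrightarrow> distr M M (g t) = M"
    and cover: "AE x in M. \<exists>t\<in>T. g t x \<in> E"
  shows "1 \<le> card T * prob E"
proof -
  have events: "g t -` E \<inter> space M \<in> events" if "t \<in> T" for t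
    using measurable_sets[OF g_meas[OF that] E] .
  have union: "(\<Union>t\<in>T. g t -` E \<inter> space M) \<in> events"
    by (rule sets.finite_UN[OF \<open>finite T\<close> events])
  have "AE x in M. x \<in> (\<Union>t\<in>T. g t -` E \<inter> space M)"
    using cover by (rule AE_mp) (auto intro!: AE_I2)
  then have "1 = prob (\<Union>t\<in>T. g t -` E \<inter> space M)"
    by (simp only: AE_in_set_eq_1[OF union])
  also have "\<dots> \<le> (\<Sum>t\<in>T. prob (g t -` E \<inter> space M))"
    using events by (intro finite_measure_subadditive_finite[OF \<open>finite T\<close>]) auto
  also have "\<dots> = (\<Sum>t\<in>T. prob E)"
    using measure_distr[OF g_meas E] g_distr by (intro sum.cong) auto
  finally show ?thesis
    by simp
qed

lemma sign_vector_mult: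
  assumes "d1 \<in> sign_vectors" "d2 \<in> sign_vectors"
  shows "d1 i * d2 j \<in> {-1, 1}"
proof -
  have "d1 i \<in> {-1, 1}" "d2 j \<in> {-1, 1}"
    using assms unfolding sign_vectors_def by blast+
  then show ?thesis
    by auto
qed

lemma card_sign_vectors: "card (sign_vectors :: ('n::finite \<Rightarrow> real) set) = 2 ^ CARD('n)"
  by (simp add: sign_vectors_eq_PiE card_PiE numeral_2_eq_2)

lemma card_sign_vectors_normalized:
  fixes i0 :: "'n::finite"
  shows "card {d \<in> (sign_vectors :: ('n \<Rightarrow> real) set). d i0 = 1} = 2 ^ (CARD('n) - 1)"
proof -
  have "{d \<in> sign_vectors. d i0 = 1} = (\<Pi>\<^sub>E i\<in>UNIV. if i = i0 then {1} else {-1, 1::real})"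
    by (auto simp: sign_vectors_def PiE_UNIV_domain split: if_splits)
  also have "card \<dots> = (\<Prod>i\<in>UNIV. if i = i0 then 1 else 2)"
    by (simp add: card_PiE if_distrib numeral_2_eq_2 cong: if_cong)
  also have "\<dots> = 2 ^ (CARD('n) - 1)"
    by (simp add: prod.If_cases Compl_eq_Diff_UNIV card_Diff_singleton)
  finally show ?thesis .
qed

lemma card_normalized_sign_vector_pairs:
  fixes i0 :: "'n::finite"
  shows "card ({d \<in> sign_vectors. d i0 = 1} \<times> (sign_vectors :: ('n \<Rightarrow> real) set)) = 2 ^ (2 * CARD('n) - 1)"
proof -
  have "CARD('n) - 1 + CARD('n) = 2 * CARD('n) - 1"
    using finite_UNIV_card_ge_0[where 'a='n] by simp
  then show ?thesis
    by (simp add: card_cartesian_product card_sign_vectors card_sign_vectors_normalized flip: power_add)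
qed

definition sign_flip ::
    "('m \<Rightarrow> real) \<times> ('n \<Rightarrow> real) \<Rightarrow> ('m \<times> 'n \<Rightarrow> real) \<Rightarrow> 'm \<times> 'n \<Rightarrow> real" where
  "sign_flip d B = (\<lambda>(i, j). fst d i * snd d j * B (i, j))"

lemma sign_flip_eq_scale_coordinates: "sign_flip d = (\<lambda>B k. (\<lambda>(i, j). fst d i * snd d j) k * B k)"
  by (auto simp: sign_flip_def fun_eq_iff)

lemma matrix_of_entries_sign_flip:
  "matrix_of_entries (sign_flip (d1, d2) B) = sign_scaled d1 d2 (matrix_of_entries B)"
  by (simp add: matrix_of_entries_def sign_flip_def sign_scaled_def)

lemma measurable_sign_flip:
  fixes D :: "real measure"
  assumes "sets D = sets borel"
  shows "sign_flip d \<in> measurable (PiM UNIV (\<lambda>_. D)) (PiM UNIV (\<lambda>_. D))"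
  unfolding sign_flip_eq_scale_coordinates by (rule measurable_PiM_scale_coordinates[OF assms])

lemma distr_PiM_sign_flip:
  fixes D :: "real measure" and d :: "('n::finite \<Rightarrow> real) \<times> ('n \<Rightarrow> real)"
  assumes "prob_space D" "sets D = sets borel" "distr D borel uminus = D"
    and d: "d \<in> sign_vectors \<times> sign_vectors"
  shows "distr (PiM UNIV (\<lambda>_. D)) (PiM UNIV (\<lambda>_. D)) (sign_flip d) = PiM UNIV (\<lambda>_. D)"
proof -
  obtain d1 d2 where d: "d = (d1, d2)" "d1 \<in> sign_vectors" "d2 \<in> sign_vectors"
    using assms(4) by auto
  have "(\<lambda>(i, j). fst d i * snd d j) k \<in> {-1, 1}" for k
    by (cases k) (simp only: d case_prod_conv fst_conv snd_conv sign_vector_mult[OF d(2,3)])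
  then show ?thesis
    unfolding sign_flip_eq_scale_coordinates by (rule distr_PiM_scale_coordinates[OF assms(1-3)])
qed

lemma nonsingular_imp_sign_flip_equilibrium:
  fixes B :: "'n::finite \<times> 'n \<Rightarrow> real" and i0 :: 'n
  assumes "det (matrix_of_entries B :: real^'n^'n) \<noteq> 0" "0 < s"
  shows "\<exists>d\<in>{d1\<in>sign_vectors. d1 i0 = 1} \<times> sign_vectors.
           equilibrium (perturbed_ones s (sign_flip d B) :: real^'n^'n)"
proof -
  obtain e1 e2 where e: "e1 \<in> sign_vectors" "e2 \<in> sign_vectors"
    and eq: "positive_equalizer (sign_scaled e1 e2 (matrix_of_entries B :: real^'n^'n))"
    using invertible_imp_sign_scaled_positive_equalizer assms(1) invertible_det_nz by blast
  define d where "d = (if e1 i0 = 1 then (e1, e2) else (- e1, - e2))"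
  have "d \<in> {d1\<in>sign_vectors. d1 i0 = 1} \<times> (sign_vectors :: ('n \<Rightarrow> real) set)"
    using e by (simp add: d_def sign_vectors_def) (metis minus_minus)
  moreover have "equilibrium (perturbed_ones s (sign_flip d B) :: real^'n^'n)"
    using eq assms(2) unfolding d_def
    by (intro equilibrium_perturbed_ones) (simp add: matrix_of_entries_sign_flip sign_scaled_uminus)
  ultimately show ?thesis
    by (rule bexI[rotated])
qed

lemma AE_PiM_sign_flip_equilibrium:
  fixes D :: "real measure" and i0 :: "'n::finite"
  assumes "prob_space D" "sets D = sets borel" "\<And>y. emeasure D {y} = 0" "0 < s"
  shows "AE B in PiM UNIV (\<lambda>_. D). \<exists>d\<in>{d1\<in>sign_vectors. d1 i0 = 1} \<times> sign_vectors.
    sign_flip d B \<in> {B \<in> space (PiM UNIV (\<lambda>_. D)). equilibrium (perturbed_ones s B :: real^'n^'n)}"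
  using AE_PiM_det_nonzero[OF assms(1-3)]
proof (rule eventually_mono)
  fix B :: "'n \<times> 'n \<Rightarrow> real"
  assume "det (matrix_of_entries B :: real^'n^'n) \<noteq> 0"
  from nonsingular_imp_sign_flip_equilibrium[OF this assms(4), of i0]
  show "\<exists>d\<in>{d1\<in>sign_vectors. d1 i0 = 1} \<times> sign_vectors.
    sign_flip d B \<in> {B \<in> space (PiM UNIV (\<lambda>_. D)). equilibrium (perturbed_ones s B :: real^'n^'n)}"
    using sets_eq_imp_space_eq[OF assms(2)] by (auto simp: space_PiM PiE_UNIV_domain)
qed

lemma emeasure_singleton_eq_0_if_absolutely_continuous:
  assumes "absolutely_continuous lborel D"
  shows "emeasure D {y} = 0"
proof -
  have "{y} \<in> null_sets lborel"
    by (simp add: null_sets_def)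
  then show ?thesis
    using assms unfolding absolutely_continuous_def by auto
qed

theorem theorem7:
  fixes D :: "real measure" and s :: real
  assumes "prob_space D"
    and "sets D = sets borel"
    and "absolutely_continuous lborel D"
    and "measure D {-1..1} = 1"
    and "distr D borel uminus = D"
    and "s > 0"
  shows "measure (PiM (UNIV :: ('n::finite \<times> 'n) set) (\<lambda>_. D))
           {B \<in> space (PiM (UNIV :: ('n \<times> 'n) set) (\<lambda>_. D)).
              equilibrium (perturbed_ones s B :: real^'n^'n)}
         \<ge> (1/2) ^ (2 * CARD('n) - 1)"
proof -
  let ?P = "PiM (UNIV :: ('n \<times> 'n) set) (\<lambda>_. D)"
  let ?E = "{B \<in> space ?P. equilibrium (perturbed_ones s B :: real^'n^'n)}"
  fix i0 :: 'n
  let ?T = "{d \<in> sign_vectors. d i0 = 1} \<times> (sign_vectors :: ('n \<Rightarrow> real) set)"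
  interpret P: prob_space ?P
    by (intro prob_space_PiM assms(1))
  have "1 \<le> card ?T * P.prob ?E"
  proof (rule P.prob_ge_inverse_card_if_AE_cover[where g = sign_flip])
    show "finite ?T"
      by (simp add: finite_sign_vectors)
    show "?E \<in> P.events"
      by (rule sets_perturbed_ones_equilibria[OF assms(2)])
    show "sign_flip d \<in> measurable ?P ?P" for d
      by (rule measurable_sign_flip[OF assms(2)])
    show "distr ?P ?P (sign_flip d) = ?P" if "d \<in> ?T" for d
      using that by (intro distr_PiM_sign_flip[OF assms(1,2,5)]) auto
    show "AE B in ?P. \<exists>d\<in>?T. sign_flip d B \<in> ?E"
      using emeasure_singleton_eq_0_if_absolutely_continuous[OF assms(3)]
      by (rule AE_PiM_sign_flip_equilibrium[OF assms(1,2) _ assms(6)])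
  qed
  then show ?thesis
    by (simp add: card_normalized_sign_vector_pairs power_one_over field_simps)
qed
end
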